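(* For every integer $t\ge 0$: $m_2^{(1)}(3,3t+2)=15t+8$, $m_2^{(1)}(3,3t+3)=15t+15$, and $m_2^{(1)}(3,3t+4)=15t+16$.
   Context: For a prime power $q$ and $N\ge1$, a multiset of points in $\mathrm{PG}(N,q)$ is a map $\mathcal{K}$ from the points to $\mathbb{Z}_{\ge0}$, with $\mathcal{K}(S)=\sum_{P\in S}\mathcal{K}(P)$; its cardinality is $\mathcal{K}(\mathrm{PG}(N,q))$. Dimensions are projective (lines have dimension 1). For $0\le r\le N-1$ and a positive integer $w$, $m_q^{(r)}(N,w)$ is the maximum cardinality of a multiset of points in $\mathrm{PG}(N,q)$ such that every $r$-dimensional subspace has multiplicity at most $w$. *)

theory Defs
  imports Main
begin

text \<open>Vectors of F^(N+1) are functions nat \<Rightarrow> 'a vanishing outside {0..N}.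
  A point is a 1-dimensional linear subspace (represented as the set of its vectors).\<close>

definition pg_vecs :: "nat \<Rightarrow> (nat \<Rightarrow> 'a::field) set" where
  "pg_vecs N = {v. \<forall>i>N. v i = 0}"

definition pg_points :: "nat \<Rightarrow> (nat \<Rightarrow> 'a::field) set set" where
  "pg_points N = {{(\<lambda>i. c * v i) | c. True} | v. v \<in> pg_vecs N \<and> v \<noteq> (\<lambda>i. 0)}"

definition lin_comb :: "(nat \<Rightarrow> 'a::field) list \<Rightarrow> (nat \<Rightarrow> 'a) \<Rightarrow> (nat \<Rightarrow> 'a)" where
  "lin_comb vs c = (\<lambda>i. \<Sum>j<length vs. c j * (vs ! j) i)"

definition lin_span :: "(nat \<Rightarrow> 'a::field) list \<Rightarrow> (nat \<Rightarrow> 'a) set" where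
  "lin_span vs = {lin_comb vs c | c. True}"

definition lin_indep :: "(nat \<Rightarrow> 'a::field) list \<Rightarrow> bool" where
  "lin_indep vs \<longleftrightarrow> (\<forall>c. lin_comb vs c = (\<lambda>i. 0) \<longrightarrow> (\<forall>j<length vs. c j = 0))"

definition pg_subspaces :: "nat \<Rightarrow> nat \<Rightarrow> (nat \<Rightarrow> 'a::field) set set set" where
  "pg_subspaces N r = {{P \<in> pg_points N. P \<subseteq> lin_span vs} | vs.
      length vs = r + 1 \<and> set vs \<subseteq> pg_vecs N \<and> lin_indep vs}"

text \<open>A multiset of points is K :: point \<Rightarrow> nat (values off the point set are irrelevant).
  m_F^{(r)}(N,w): maximum cardinality of a multiset with every r-space of multiplicity \<le> w.\<close>
definition pg_m :: "'a::{field,finite} itself \<Rightarrow> nat \<Rightarrow> nat \<Rightarrow> nat \<Rightarrow> nat" where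
  "pg_m _ N r w = Max {(\<Sum>P\<in>(pg_points N :: (nat \<Rightarrow> 'a) set set). K P) | K.
      \<forall>S\<in>(pg_subspaces N r :: (nat \<Rightarrow> 'a) set set set). (\<Sum>P\<in>S. K P) \<le> w}"

end

theory Submission
  imports Defs "HOL-Library.Function_Algebras"
begin

text \<open>Over GF(2) the points of PG(N,2) are the nonzero vectors, and the line through the points
  u and v is {u, v, u + v}. Every other point lies on exactly one of the 2^N - 1 lines through v,
  so summing the line bound over them gives (2^N - 2) K(v) + |K| \<le> (2^N - 1) w, that is
  6 K(v) + |K| \<le> 7 w in PG(3,2). If |K| exceeded the claimed value, this would force K(v) \<le> t,
  resp. K(v) \<le> t + 1, at each of the 15 points, and hence |K| \<le> 15 t, resp. 15 (t + 1), a
  contradiction. The values are attained by adding t, resp. t + 1, to every point of the affine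
  space AG(3,2) (the complement of a plane, which meets every line in at most two points), of the
  empty multiset, and of a single point.\<close>

lemma sum_le_by_pointwise_cap:
  fixes k :: "'b \<Rightarrow> nat"
  assumes bound: "\<And>v. v \<in> V \<Longrightarrow> a * k v + sum k V \<le> b"
    and "b \<le> B + a * (c + 1)" and "card V * c \<le> B"
  shows "sum k V \<le> B"
proof (rule ccontr)
  assume "\<not> sum k V \<le> B"
  have "k v \<le> c" if "v \<in> V" for v
  proof -
    have "a * k v < a * (c + 1)"
      using bound[OF that] assms(2) \<open>\<not> sum k V \<le> B\<close> by linarith
    then show ?thesis
      by (metis Suc_eq_plus1 less_Suc_eq_le mult_less_cancel1)
  qed
  then have "sum k V \<le> card V * c"
    using sum_bounded_above[of V k c] by simp
  with assms(3) \<open>\<not> sum k V \<le> B\<close> show False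
    by linarith
qed

definition multiplicity_bounded :: "nat \<Rightarrow> nat \<Rightarrow> nat \<Rightarrow> ((nat \<Rightarrow> 'a::field) set \<Rightarrow> nat) \<Rightarrow> bool"
  where "multiplicity_bounded N r w K \<longleftrightarrow> (\<forall>S\<in>pg_subspaces N r. sum K S \<le> w)"

definition pg_point :: "(nat \<Rightarrow> 'a::field) \<Rightarrow> (nat \<Rightarrow> 'a) set"
  where "pg_point v = {(\<lambda>i. c * v i) | c. True}"

definition nonzero_vecs :: "nat \<Rightarrow> (nat \<Rightarrow> 'a::field) set"
  where "nonzero_vecs N = pg_vecs N - {0}"

lemma pg_m_eqI:
  fixes K0 :: "(nat \<Rightarrow> 'a::{field,finite}) set \<Rightarrow> nat"
  assumes "\<And>K :: (nat \<Rightarrow> 'a) set \<Rightarrow> nat. multiplicity_bounded N r w K \<Longrightarrow> sum K (pg_points N) \<le> B"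
    and "multiplicity_bounded N r w K0" and "sum K0 (pg_points N) = B"
  shows "pg_m TYPE('a) N r w = B"
proof -
  let ?M = "{sum K (pg_points N) | K :: (nat \<Rightarrow> 'a) set \<Rightarrow> nat. multiplicity_bounded N r w K}"
  have "?M \<subseteq> {..B}" and "B \<in> ?M"
    using assms by blast+
  then have "Max ?M = B"
    by (intro Max_eqI) (auto intro: finite_subset)
  then show ?thesis
    unfolding pg_m_def multiplicity_bounded_def .
qed

lemma zero_notin_nonzero_vecs [simp]: "0 \<notin> nonzero_vecs N"
  by (simp add: nonzero_vecs_def)

lemma pg_points_eq: "pg_points N = pg_point ` nonzero_vecs N"
  unfolding pg_points_def pg_point_def nonzero_vecs_def zero_fun_def by auto

lemma inj_indicator_vec: "inj (\<lambda>S i. of_bool (i \<in> S) :: 'a::zero_neq_one)"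
  by (rule injI) (simp add: fun_eq_iff set_eq_iff of_bool_eq_iff)

lemma lin_comb_pair: "lin_comb [a, b] c = (\<lambda>i. c 0 * a i + c 1 * b i)"
  unfolding lin_comb_def by (simp add: numeral_2_eq_2)

lemma multiplicity_bounded_point: "multiplicity_bounded N r 1 (\<lambda>P. of_bool (P = Q))"
  unfolding multiplicity_bounded_def
proof
  fix S :: "(nat \<Rightarrow> 'a) set set"
  show "(\<Sum>P\<in>S. of_bool (P = Q)) \<le> (1::nat)"
    by (cases "finite S") (simp_all add: of_bool_def)
qed

context
  assumes card_UNIV_eq_2: "card (UNIV :: 'a::{field,finite} set) = 2"
begin

lemma GF2_cases: "(x::'a) = 0 \<or> x = 1"
proof -
  have "{0::'a, 1} = UNIV"
    using card_UNIV_eq_2 by (simp add: card_subset_eq)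
  then show ?thesis
    by auto
qed

lemma GF2_two_eq_0 [simp]: "(2::'a) = 0"
proof -
  have "(1::'a) + 1 \<noteq> 1"
    by (metis add_cancel_left_right one_neq_zero)
  then show ?thesis
    using GF2_cases[of "1 + 1"] by (simp add: one_add_one)
qed

lemma vec_add_self [simp]: "(v :: nat \<Rightarrow> 'a) + v = 0"
  by (simp add: fun_eq_iff)

lemma vec_add_eq_0_iff [simp]: "(u :: nat \<Rightarrow> 'a) + v = 0 \<longleftrightarrow> u = v"
  by (metis add.assoc add.right_neutral vec_add_self)

lemma pg_point_eq: "pg_point (v :: nat \<Rightarrow> 'a) = {0, v}"
proof -
  have "(\<lambda>i. c * v i) \<in> {0, v}" for c :: 'a
    using GF2_cases[of c] by (auto simp: zero_fun_def)
  moreover have "0 = (\<lambda>i. 0 * v i)" and "v = (\<lambda>i. 1 * v i)"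
    by (simp_all add: zero_fun_def)
  ultimately show ?thesis
    unfolding pg_point_def by blast
qed

lemma inj_pg_point: "inj (pg_point :: (nat \<Rightarrow> 'a) \<Rightarrow> _)"
  by (rule injI) (auto simp: pg_point_eq doubleton_eq_iff)

lemma sum_pg_points: "sum K (pg_points N) = (\<Sum>v\<in>nonzero_vecs N. K (pg_point (v :: nat \<Rightarrow> 'a)))"
  unfolding pg_points_eq by (simp add: sum.reindex inj_on_subset[OF inj_pg_point])

lemma pg_vecs_eq_image: "pg_vecs N = (\<lambda>S i. of_bool (i \<in> S) :: 'a) ` Pow {..N}"
proof (intro equalityI subsetI)
  fix v :: "nat \<Rightarrow> 'a"
  assume "v \<in> pg_vecs N"
  then have "v = (\<lambda>i. of_bool (i \<in> {i. i \<le> N \<and> v i \<noteq> 0}))"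
    using GF2_cases by (fastforce simp: pg_vecs_def)
  then show "v \<in> (\<lambda>S i. of_bool (i \<in> S)) ` Pow {..N}"
    by (rule image_eqI) auto
qed (auto simp: pg_vecs_def)

lemma card_pg_vecs: "card (pg_vecs N :: (nat \<Rightarrow> 'a) set) = 2 ^ Suc N"
  unfolding pg_vecs_eq_image
  by (simp add: card_image inj_on_subset[OF inj_indicator_vec] card_Pow)

lemma finite_pg_vecs: "finite (pg_vecs N :: (nat \<Rightarrow> 'a) set)"
  unfolding pg_vecs_eq_image by simp

lemma card_nonzero_vecs: "card (nonzero_vecs N :: (nat \<Rightarrow> 'a) set) = 2 ^ Suc N - 1"
proof -
  have "0 \<in> (pg_vecs N :: (nat \<Rightarrow> 'a) set)"
    by (simp add: pg_vecs_def)
  then show ?thesis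
    unfolding nonzero_vecs_def by (simp add: card_pg_vecs finite_pg_vecs)
qed

lemma finite_nonzero_vecs: "finite (nonzero_vecs N :: (nat \<Rightarrow> 'a) set)"
  unfolding nonzero_vecs_def using finite_pg_vecs by simp

lemma card_pg_points: "card (pg_points N :: (nat \<Rightarrow> 'a) set set) = 2 ^ Suc N - 1"
  unfolding pg_points_eq
  by (simp add: card_image inj_on_subset[OF inj_pg_point] card_nonzero_vecs)

lemma finite_pg_points: "finite (pg_points N :: (nat \<Rightarrow> 'a) set set)"
  unfolding pg_points_eq nonzero_vecs_def using finite_pg_vecs by simp

lemma card_vecs_coord0_nonzero: "card {v \<in> pg_vecs N. v 0 \<noteq> (0::'a)} = 2 ^ N"
proof -
  have "{v \<in> pg_vecs N. v 0 \<noteq> (0::'a)} = (\<lambda>S i. of_bool (i \<in> S)) ` {S \<in> Pow {..N}. (of_bool (0 \<in> S) :: 'a) \<noteq> 0}"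
    unfolding pg_vecs_eq_image by blast
  also have "{S \<in> Pow {..N}. (of_bool (0 \<in> S) :: 'a) \<noteq> 0} = insert 0 ` Pow {1..N}"
  proof (intro equalityI subsetI)
    fix S assume "S \<in> {S \<in> Pow {..N}. (of_bool (0 \<in> S) :: 'a) \<noteq> 0}"
    then have "S = insert 0 (S - {0})" and "S - {0} \<in> Pow {1..N}"
      by auto
    then show "S \<in> insert 0 ` Pow {1..N}"
      by (rule image_eqI)
  qed auto
  finally have "{v \<in> pg_vecs N. v 0 \<noteq> (0::'a)} = (\<lambda>S i. of_bool (i \<in> S)) ` insert 0 ` Pow {1..N}" .
  moreover have "inj_on (insert (0::nat)) (Pow {1..N})"
    by (rule inj_onI) (metis PowD atLeastAtMost_iff insert_ident not_one_le_zero subset_iff)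
  ultimately show ?thesis
    by (simp add: card_image inj_on_subset[OF inj_indicator_vec] card_Pow)
qed

lemma lin_comb_pair_GF2:
  "lin_comb [a, b :: nat \<Rightarrow> 'a] c = (if c 0 = 0 then 0 else a) + (if c 1 = 0 then 0 else b)"
  using GF2_cases[of "c 0"] GF2_cases[of "c 1"]
  by (elim disjE) (simp_all add: lin_comb_pair fun_eq_iff)

lemma lin_span_pair: "lin_span [a, b :: nat \<Rightarrow> 'a] = {0, a, b, a + b}"
proof (intro equalityI subsetI)
  fix x
  assume "x \<in> lin_span [a, b]"
  then show "x \<in> {0, a, b, a + b}"
    by (auto simp: lin_span_def lin_comb_pair_GF2)
next
  fix x
  assume "x \<in> {0, a, b, a + b}"
  moreover have "lin_comb [a, b] (\<lambda>_. 0) = 0" "lin_comb [a, b] (\<lambda>j. of_bool (j = 0)) = a"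
    "lin_comb [a, b] (\<lambda>j. of_bool (j = 1)) = b" "lin_comb [a, b] (\<lambda>_. 1) = a + b"
    by (simp_all add: lin_comb_pair_GF2)
  ultimately show "x \<in> lin_span [a, b]"
    unfolding lin_span_def mem_Collect_eq by (metis empty_iff insertE)
qed

lemma lin_indep_pair_iff: "lin_indep [a, b :: nat \<Rightarrow> 'a] \<longleftrightarrow> a \<noteq> 0 \<and> b \<noteq> 0 \<and> a \<noteq> b"
proof
  assume "lin_indep [a, b]"
  then have coeffs_zero: "c j = 0" if "lin_comb [a, b] c = 0" "j < 2" for c j
    using that unfolding lin_indep_def zero_fun_def by simp
  have "lin_comb [a, b] (\<lambda>j. of_bool (j = 0)) \<noteq> 0"
    using coeffs_zero[of _ 0] by force
  moreover have "lin_comb [a, b] (\<lambda>j. of_bool (j = 1)) \<noteq> 0"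
    using coeffs_zero[of _ 1] by force
  moreover have "lin_comb [a, b] (\<lambda>_. 1) \<noteq> 0"
    using coeffs_zero[of _ 0] by force
  ultimately show "a \<noteq> 0 \<and> b \<noteq> 0 \<and> a \<noteq> b"
    by (simp add: lin_comb_pair_GF2)
next
  assume "a \<noteq> 0 \<and> b \<noteq> 0 \<and> a \<noteq> b"
  then have "c 0 = 0 \<and> c 1 = 0" if "lin_comb [a, b] c = 0" for c
    using that by (simp add: lin_comb_pair_GF2 split: if_splits)
  moreover have "j = 0 \<or> j = 1" if "j < length [a, b]" for j
    using that by auto
  ultimately show "lin_indep [a, b]"
    unfolding lin_indep_def zero_fun_def[symmetric] by metis
qed

lemma add_mem_nonzero_vecs:
  "a \<in> nonzero_vecs N \<Longrightarrow> b \<in> nonzero_vecs N \<Longrightarrow> a \<noteq> b \<Longrightarrow> a + b \<in> (nonzero_vecs N :: (nat \<Rightarrow> 'a) set)"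
  by (simp add: nonzero_vecs_def pg_vecs_def)

lemma pg_line_eq:
  assumes "a \<in> nonzero_vecs N" "b \<in> nonzero_vecs N" "a \<noteq> (b :: nat \<Rightarrow> 'a)"
  shows "{P \<in> pg_points N. P \<subseteq> lin_span [a, b]} = {pg_point a, pg_point b, pg_point (a + b)}"
proof -
  have "{P \<in> pg_points N. P \<subseteq> lin_span [a, b]} = pg_point ` {u \<in> nonzero_vecs N. u \<in> {a, b, a + b}}"
    unfolding pg_points_eq lin_span_pair pg_point_eq by (auto simp: nonzero_vecs_def)
  also have "{u \<in> nonzero_vecs N. u \<in> {a, b, a + b}} = {a, b, a + b}"
    using assms add_mem_nonzero_vecs[OF assms] by blast
  finally show ?thesis
    by simp
qed

lemma pg_subspaces_1_eq:
  "pg_subspaces N 1 = {{pg_point a, pg_point b, pg_point (a + b)} | a b :: nat \<Rightarrow> 'a.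
     a \<in> nonzero_vecs N \<and> b \<in> nonzero_vecs N \<and> a \<noteq> b}"
proof (intro equalityI subsetI)
  fix S :: "(nat \<Rightarrow> 'a) set set"
  assume "S \<in> pg_subspaces N 1"
  then obtain a b :: "nat \<Rightarrow> 'a" where "S = {P \<in> pg_points N. P \<subseteq> lin_span [a, b]}"
    and "a \<in> pg_vecs N" "b \<in> pg_vecs N" "lin_indep [a, b]"
    unfolding pg_subspaces_def by (auto simp: length_Suc_conv)
  then show "S \<in> {{pg_point a, pg_point b, pg_point (a + b)} | a b.
     a \<in> nonzero_vecs N \<and> b \<in> nonzero_vecs N \<and> a \<noteq> b}"
    using pg_line_eq by (auto simp: lin_indep_pair_iff nonzero_vecs_def)
next
  fix S
  assume "S \<in> {{pg_point a, pg_point b, pg_point (a + b)} | a b :: nat \<Rightarrow> 'a.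
     a \<in> nonzero_vecs N \<and> b \<in> nonzero_vecs N \<and> a \<noteq> b}"
  then obtain a b :: "nat \<Rightarrow> 'a" where ab: "a \<in> nonzero_vecs N" "b \<in> nonzero_vecs N" "a \<noteq> b"
    and "S = {pg_point a, pg_point b, pg_point (a + b)}"
    by blast
  then have "S = {P \<in> pg_points N. P \<subseteq> lin_span [a, b]}"
    using pg_line_eq by simp
  moreover have "length [a, b] = 1 + 1" "set [a, b] \<subseteq> pg_vecs N" "lin_indep [a, b]"
    using ab by (auto simp: lin_indep_pair_iff nonzero_vecs_def)
  ultimately show "S \<in> pg_subspaces N 1"
    unfolding pg_subspaces_def by blast
qed

lemma multiplicity_bounded_1_iff:
  "multiplicity_bounded N 1 w K \<longleftrightarrow> (\<forall>a\<in>nonzero_vecs N. \<forall>b\<in>nonzero_vecs N. a \<noteq> b \<longrightarrow>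
     K (pg_point a) + K (pg_point b) + K (pg_point (a + b :: nat \<Rightarrow> 'a)) \<le> w)"
  (is "_ \<longleftrightarrow> ?rhs")
proof -
  have line_sum: "sum K {pg_point a, pg_point b, pg_point (a + b)} = K (pg_point a) + K (pg_point b) + K (pg_point (a + b))"
    if "a \<in> nonzero_vecs N" "b \<in> nonzero_vecs N" "a \<noteq> (b :: nat \<Rightarrow> 'a)" for a b
  proof -
    have "pg_point a \<noteq> pg_point b" "pg_point a \<noteq> pg_point (a + b)" "pg_point b \<noteq> pg_point (a + b)"
      using that by (auto simp: inj_eq[OF inj_pg_point] nonzero_vecs_def)
    then show ?thesis
      by simp
  qed
  have "multiplicity_bounded N 1 w K \<longleftrightarrow> (\<forall>a\<in>nonzero_vecs N. \<forall>b\<in>nonzero_vecs N. a \<noteq> b \<longrightarrow>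
      sum K {pg_point a, pg_point b, pg_point (a + b :: nat \<Rightarrow> 'a)} \<le> w)"
    unfolding multiplicity_bounded_def pg_subspaces_1_eq by blast
  also have "\<dots> \<longleftrightarrow> ?rhs"
    by (simp add: line_sum)
  finally show ?thesis .
qed

lemma pencil_bound:
  assumes "multiplicity_bounded N 1 w K" and v: "v \<in> nonzero_vecs N"
  shows "(2 ^ N - 1) * K (pg_point v) + (\<Sum>u\<in>nonzero_vecs N - {v}. K (pg_point (u :: nat \<Rightarrow> 'a)))
    \<le> (2 ^ N - 1) * w"
proof -
  let ?k = "\<lambda>u. K (pg_point (u :: nat \<Rightarrow> 'a))"
  define W where "W = nonzero_vecs N - {v}"
  define m :: nat where "m = 2 ^ N - 1"
  have "card W = 2 ^ Suc N - 2"
    using v by (simp add: W_def card_nonzero_vecs finite_nonzero_vecs)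
  then have card_W: "card W = 2 * m"
    by (simp add: m_def right_diff_distrib')
  txt \<open>u and v + u lie on the same line through v, so the sum over W counts each such line twice.\<close>
  have "bij_betw ((+) v) W W"
    by (rule bij_betw_byWitness[where f' = "(+) v"])
      (auto simp: W_def add.assoc[symmetric] intro: add_mem_nonzero_vecs[OF v])
  then have reindex: "(\<Sum>u\<in>W. ?k (v + u)) = sum ?k W"
    by (rule sum.reindex_bij_betw)
  have line_bound: "?k v + ?k u + ?k (v + u) \<le> w" if "u \<in> W" for u
  proof -
    have "u \<in> nonzero_vecs N" "v \<noteq> u"
      using that by (auto simp: W_def)
    then show ?thesis
      using assms(1)[unfolded multiplicity_bounded_1_iff] v by blast
  qed
  have "2 * (m * ?k v + sum ?k W) = card W * ?k v + sum ?k W + (\<Sum>u\<in>W. ?k (v + u))"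
    by (simp add: card_W reindex)
  also have "\<dots> = (\<Sum>u\<in>W. ?k v + ?k u + ?k (v + u))"
    by (simp add: sum.distrib)
  also have "\<dots> \<le> card W * w"
    using sum_bounded_above[of W _ w] line_bound by simp
  also have "\<dots> = 2 * (m * w)"
    by (simp add: card_W)
  finally show ?thesis
    by (simp add: m_def W_def)
qed

lemma sum_pg_points_le_of_multiplicity_bounded_1:
  assumes "multiplicity_bounded N 1 w K" and "0 < N"
    and "(2 ^ N - 1) * w \<le> B + (2 ^ N - 2) * (c + 1)" and "(2 ^ Suc N - 1) * c \<le> B"
  shows "sum K (pg_points N :: (nat \<Rightarrow> 'a) set set) \<le> B"
proof -
  let ?k = "\<lambda>u. K (pg_point (u :: nat \<Rightarrow> 'a))"
  define m :: nat where "m = 2 ^ N - 2"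
  have "2 \<le> (2::nat) ^ N"
    using \<open>0 < N\<close> by (simp add: self_le_power)
  then have m: "2 ^ N - 1 = m + 1" "2 ^ N - 2 = m"
    by (simp_all add: m_def)
  have "m * ?k v + sum ?k (nonzero_vecs N) \<le> (m + 1) * w" if v: "v \<in> nonzero_vecs N" for v
  proof -
    have "sum ?k (nonzero_vecs N) = ?k v + sum ?k (nonzero_vecs N - {v})"
      using finite_nonzero_vecs v by (rule sum.remove)
    moreover have "(m + 1) * ?k v + sum ?k (nonzero_vecs N - {v}) \<le> (m + 1) * w"
      using pencil_bound[OF assms(1) v] by (simp only: m)
    ultimately show ?thesis
      by (simp add: algebra_simps)
  qed
  then show ?thesis
    unfolding sum_pg_points using assms(3)[unfolded m] assms(4) card_nonzero_vecs[of N]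
    by (intro sum_le_by_pointwise_cap[where a = m and b = "(m + 1) * w" and c = c]) simp_all
qed

lemma multiplicity_bounded_1_add_const:
  fixes K :: "(nat \<Rightarrow> 'a) set \<Rightarrow> nat"
  shows "multiplicity_bounded N 1 w K \<Longrightarrow> multiplicity_bounded N 1 (w + 3 * c) (\<lambda>P. K P + c)"
  unfolding multiplicity_bounded_1_iff by fastforce

lemma sum_pg_points_add_const:
  fixes K :: "(nat \<Rightarrow> 'a) set \<Rightarrow> nat"
  shows "(\<Sum>P\<in>pg_points N. K P + c) = sum K (pg_points N) + (2 ^ Suc N - 1) * c"
  by (simp add: sum.distrib card_pg_points)

lemma multiplicity_bounded_off_hyperplane:
  "multiplicity_bounded N 1 2 (\<lambda>P. of_bool (\<exists>x\<in>P. x 0 \<noteq> (0::'a)))"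
proof -
  have "of_bool (x \<noteq> 0) + of_bool (y \<noteq> 0) + of_bool (x + y \<noteq> 0) \<le> (2::nat)" for x y :: 'a
    using GF2_cases[of x] GF2_cases[of y] by (elim disjE) simp_all
  then show ?thesis
    unfolding multiplicity_bounded_1_iff by (simp add: pg_point_eq)
qed

lemma sum_off_hyperplane: "(\<Sum>P\<in>pg_points N. of_bool (\<exists>x\<in>P. x 0 \<noteq> (0::'a))) = (2 ^ N :: nat)"
proof -
  have "nonzero_vecs N \<inter> {v. v 0 \<noteq> 0} = {v \<in> pg_vecs N. v 0 \<noteq> (0::'a)}"
    by (auto simp: nonzero_vecs_def)
  then show ?thesis
    by (simp add: sum_pg_points pg_point_eq finite_nonzero_vecs card_vecs_coord0_nonzero)
qed

lemma sum_pg_points_indicator: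
  "v \<in> nonzero_vecs N \<Longrightarrow> (\<Sum>P\<in>pg_points N. of_bool (P = pg_point (v :: nat \<Rightarrow> 'a))) = (1::nat)"
  using finite_pg_points by (simp add: pg_points_eq)

lemma pg_m_3_1_eqI:
  fixes K :: "(nat \<Rightarrow> 'a) set \<Rightarrow> nat"
  assumes "multiplicity_bounded 3 1 w K" and "sum K (pg_points 3) = B"
    and "7 * w \<le> B + 6 * (c + 1)" and "15 * c \<le> B"
  shows "pg_m TYPE('a) 3 1 w = B"
proof (rule pg_m_eqI[OF _ assms(1,2)])
  fix K' :: "(nat \<Rightarrow> 'a) set \<Rightarrow> nat"
  assume "multiplicity_bounded 3 1 w K'"
  then show "sum K' (pg_points 3) \<le> B"
    by (rule sum_pg_points_le_of_multiplicity_bounded_1[where c = c]) (use assms(3,4) in simp_all)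
qed

lemma pg_m_3_1_3t_plus_2: "pg_m TYPE('a) 3 1 (3 * t + 2) = 15 * t + 8"
proof (rule pg_m_3_1_eqI[where c = t])
  show "multiplicity_bounded 3 1 (3 * t + 2) (\<lambda>P. of_bool (\<exists>x\<in>P. x 0 \<noteq> (0::'a)) + t)"
    using multiplicity_bounded_1_add_const[OF multiplicity_bounded_off_hyperplane, of 3 t]
    by (simp add: add.commute)
  show "(\<Sum>P\<in>pg_points 3. of_bool (\<exists>x\<in>P. x 0 \<noteq> (0::'a)) + t) = 15 * t + 8"
    by (simp add: sum_pg_points_add_const sum_off_hyperplane)
qed simp_all

lemma pg_m_3_1_3t_plus_3: "pg_m TYPE('a) 3 1 (3 * t + 3) = 15 * t + 15"
proof (rule pg_m_3_1_eqI[where c = "t + 1"])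
  show "multiplicity_bounded 3 1 (3 * t + 3) (\<lambda>P :: (nat \<Rightarrow> 'a) set. t + 1)"
    unfolding multiplicity_bounded_1_iff by simp
  show "(\<Sum>P\<in>(pg_points 3 :: (nat \<Rightarrow> 'a) set set). t + 1) = 15 * t + 15"
    by (simp add: card_pg_points)
qed simp_all

lemma pg_m_3_1_3t_plus_4: "pg_m TYPE('a) 3 1 (3 * t + 4) = 15 * t + 16"
proof -
  define e0 :: "nat \<Rightarrow> 'a" where "e0 = (\<lambda>i. of_bool (i = 0))"
  have "e0 \<in> nonzero_vecs 3"
    by (auto simp: e0_def nonzero_vecs_def pg_vecs_def fun_eq_iff)
  show ?thesis
  proof (rule pg_m_3_1_eqI[where c = "t + 1"])
    show "multiplicity_bounded 3 1 (3 * t + 4) (\<lambda>P. of_bool (P = pg_point e0) + (t + 1))"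
      using multiplicity_bounded_1_add_const[OF multiplicity_bounded_point, of 3 "t + 1"]
      by (simp add: add.commute)
    show "(\<Sum>P\<in>pg_points 3. of_bool (P = pg_point e0) + (t + 1)) = 15 * t + 16"
      using \<open>e0 \<in> nonzero_vecs 3\<close> unfolding sum_pg_points_add_const
      by (simp add: sum_pg_points_indicator)
  qed simp_all
qed

end

theorem mainTheorem3:
  fixes t :: nat
  assumes "card (UNIV :: 'a set) = 2"
  shows "pg_m TYPE('a::{field,finite}) 3 1 (3*t+2) = 15*t+8
       \<and> pg_m TYPE('a) 3 1 (3*t+3) = 15*t+15
       \<and> pg_m TYPE('a) 3 1 (3*t+4) = 15*t+16"
  using pg_m_3_1_3t_plus_2[OF assms] pg_m_3_1_3t_plus_3[OF assms] pg_m_3_1_3t_plus_4[OF assms]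
  by blast

end
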